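(* Let $0<\underline\theta<\overline\theta<\infty$ and let the buyer of type $\theta\in[\underline\theta,\overline\theta]$ have utility $u(t,q;\theta)=\theta q-qt$ on $\mathbb{Z}$. Let $\theta$ have distribution $\Gamma$ with continuous, strictly positive density $\gamma$ on $[\underline\theta,\overline\theta]$, with nondecreasing hazard rate: $\frac{\gamma(\theta')}{1-\Gamma(\theta')}\le\frac{\gamma(\theta'')}{1-\Gamma(\theta'')}$ for $\theta'<\theta''$. Let $\mathcal F$ be the set of mechanisms $F=(t,q):[\underline\theta,\overline\theta]\to[0,\overline\theta]\times[0,1]$ with finite range that are strategy-proof ($u(F(\theta);\theta)\ge u(F(\theta');\theta)$ for all $\theta,\theta'$), individually rational ($u(F(\theta);\theta)\ge0$), and satisfy: $u(F(\theta);\theta)=0$ implies $F(\theta)=(0,0)$. The seller's expected revenue is $E(F)=\int_{\underline\theta}^{\overline\theta}q(\theta)t(\theta)\gamma(\theta)\,d\theta$. Then a revenue-maximizing $F^*\in\mathcal F$ exists and is deterministic: there is $\theta^*\in[\underline\theta,\overline\theta]$ with $F^*(\theta)=(0,0)$ for $\theta\in[\underline\theta,\theta^*]$ and $F^*(\theta)=(\theta^*,1)$ for $\theta\in(\theta^*,\overline\theta]$.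
   Context: $\mathbb{Z}=[0,\infty)\times[0,1]$; $q$ is the probability of winning an indivisible object, $t$ is the payment made upon winning, and $\theta$ is the valuation. *)

theory Defs
  imports "HOL-Analysis.Analysis"
begin

definition util :: "real \<times> real \<Rightarrow> real \<Rightarrow> real" where
  "util z \<theta> = \<theta> * snd z - snd z * fst z"

definition admissible :: "real \<Rightarrow> real \<Rightarrow> (real \<Rightarrow> real \<times> real) \<Rightarrow> bool" where
  "admissible lo hi F \<longleftrightarrow>
     F ` {lo..hi} \<subseteq> {0..hi} \<times> {0..1} \<and>
     finite (F ` {lo..hi}) \<and>
     (\<forall>\<theta>\<in>{lo..hi}. \<forall>\<theta>'\<in>{lo..hi}. util (F \<theta>) \<theta> \<ge> util (F \<theta>') \<theta>) \<and>
     (\<forall>\<theta>\<in>{lo..hi}. util (F \<theta>) \<theta> \<ge> 0) \<and>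
     (\<forall>\<theta>\<in>{lo..hi}. util (F \<theta>) \<theta> = 0 \<longrightarrow> F \<theta> = (0, 0))"

definition revenue :: "real \<Rightarrow> real \<Rightarrow> (real \<Rightarrow> real) \<Rightarrow> (real \<Rightarrow> real \<times> real) \<Rightarrow> real" where
  "revenue lo hi \<gamma> F = integral {lo..hi} (\<lambda>\<theta>. snd (F \<theta>) * fst (F \<theta>) * \<gamma> \<theta>)"

definition cdf :: "real \<Rightarrow> (real \<Rightarrow> real) \<Rightarrow> real \<Rightarrow> real" where
  "cdf lo \<gamma> x = integral {lo..x} \<gamma>"

end

theory Submission
  imports Defs
begin

text \<open>An incentive-compatible mechanism with finitely many allocation levels
  \<open>0 = A\<^sub>0 < A\<^sub>1 < \<dots> < A\<^sub>m \<le> 1\<close> sells each increment \<open>A\<^sub>j \<rightarrow> A\<^sub>j\<^sub>+\<^sub>1\<close> at an incremental price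
  \<open>p\<^sub>j\<close>, and by single crossing only types valuing at least \<open>p\<^sub>j\<close> buy it. So every payment is
  dominated pointwise by the payment of the lottery over posted prices \<open>p\<^sub>j\<close> with weights
  \<open>A\<^sub>j\<^sub>+\<^sub>1 - A\<^sub>j\<close>, whose total is at most one, and the expected revenue is at most that of the
  best posted price. The best posted price exists by continuity, and posting it is itself an
  admissible mechanism.\<close>

definition price_revenue :: "real \<Rightarrow> real \<Rightarrow> (real \<Rightarrow> real) \<Rightarrow> real \<Rightarrow> real" where
  "price_revenue lo hi \<gamma> p = p * integral {max p lo..hi} \<gamma>"

definition posted_price :: "real \<Rightarrow> real \<Rightarrow> real \<times> real" where
  "posted_price p \<theta> = (if \<theta> \<le> p then (0, 0) else (p, 1))"

lemma price_revenue_has_integral: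
  assumes "continuous_on {lo..hi} \<gamma>"
  shows "((\<lambda>\<theta>. if p \<le> \<theta> then p * \<gamma> \<theta> else 0) has_integral price_revenue lo hi \<gamma> p) {lo..hi}"
proof -
  have sub: "{max p lo..hi} \<subseteq> {lo..hi}" by auto
  have "\<gamma> integrable_on {max p lo..hi}"
    by (rule integrable_continuous_real) (rule continuous_on_subset[OF assms sub])
  then have "((\<lambda>x. p * \<gamma> x) has_integral price_revenue lo hi \<gamma> p) {max p lo..hi}"
    unfolding price_revenue_def by (intro has_integral_mult_right) (rule integrable_integral)
  then have "((\<lambda>x. if x \<in> {max p lo..hi} then p * \<gamma> x else 0)
               has_integral price_revenue lo hi \<gamma> p) {lo..hi}"
    by (simp only: has_integral_restrict[OF sub])
  then show ?thesis
    by (rule has_integral_spike[OF negligible_empty, rotated]) auto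
qed

lemma price_revenue_above_support: "hi < p \<Longrightarrow> price_revenue lo hi \<gamma> p = 0"
  by (simp add: price_revenue_def)

lemma single_crossing:
  fixes \<theta>\<^sub>1 \<theta>\<^sub>2 x\<^sub>1 x\<^sub>2 P\<^sub>1 P\<^sub>2 :: real
  assumes "\<theta>\<^sub>1 * x\<^sub>2 - P\<^sub>2 \<le> \<theta>\<^sub>1 * x\<^sub>1 - P\<^sub>1" "\<theta>\<^sub>2 * x\<^sub>1 - P\<^sub>1 \<le> \<theta>\<^sub>2 * x\<^sub>2 - P\<^sub>2" "x\<^sub>1 < x\<^sub>2"
  shows "\<theta>\<^sub>1 \<le> \<theta>\<^sub>2"
proof -
  have "0 \<le> (\<theta>\<^sub>2 - \<theta>\<^sub>1) * (x\<^sub>2 - x\<^sub>1)" using assms by (simp add: algebra_simps)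
  then show ?thesis using assms(3) by (simp add: zero_le_mult_iff)
qed

lemma finite_strict_enumeration:
  fixes S :: "'a::linorder set"
  assumes "finite S" "z \<in> S" "\<And>x. x \<in> S \<Longrightarrow> z \<le> x"
  obtains m :: nat and A :: "nat \<Rightarrow> 'a"
  where "A 0 = z" "A ` {..m} = S" "\<And>i j. i < j \<Longrightarrow> j \<le> m \<Longrightarrow> A i < A j"
proof -
  define L where "L = sorted_list_of_set S"
  have set_L: "set L = S" and sorted_L: "sorted_wrt (<) L"
    using assms(1) by (simp_all add: L_def)
  obtain k where k: "k < length L" "L ! k = z" using assms(2) set_L by (auto simp: in_set_conv_nth)
  define m where "m = length L - 1"
  have len: "length L = Suc m" using k(1) by (simp add: m_def)
  have strict: "L ! i < L ! j" if "i < j" "j \<le> m" for i j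
    using sorted_wrt_nth_less[OF sorted_L, of i j] that len by simp
  have "L ! 0 = z"
  proof (rule ccontr)
    assume "L ! 0 \<noteq> z"
    then have "L ! 0 < z" using strict[of 0 k] k len by (cases k) auto
    moreover have "L ! 0 \<in> S" using set_L len nth_mem[of 0 L] by simp
    ultimately show False using assms(3) by fastforce
  qed
  moreover have "(!) L ` {..m} = S"
    using set_L len by (auto simp: in_set_conv_nth image_iff less_Suc_eq_le)
  ultimately show ?thesis using that[of "(!) L"] strict by blast
qed

text \<open>A menu pricing allocation levels \<open>x\<close> at \<open>pay x\<close>, from which type \<open>\<theta>\<close> picks
  \<open>a \<theta>\<close>; the outside option is the level \<open>0\<close> at no charge.\<close>

locale ic_menu =
  fixes T :: "real set" and a :: "real \<Rightarrow> real" and pay :: "real \<Rightarrow> real"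
  assumes types_nonneg: "T \<subseteq> {0..}"
    and finite_levels: "finite (a ` T)"
    and levels_unit: "a ` T \<subseteq> {0..1}"
    and pay_zero: "pay 0 = 0"
    and incentive_compatible:
      "\<And>\<theta> x. \<theta> \<in> T \<Longrightarrow> x \<in> insert 0 (a ` T) \<Longrightarrow> \<theta> * x - pay x \<le> \<theta> * a \<theta> - pay (a \<theta>)"
begin

lemma allocation_mono: "\<theta>\<^sub>1 \<in> T \<Longrightarrow> \<theta>\<^sub>2 \<in> T \<Longrightarrow> a \<theta>\<^sub>1 < a \<theta>\<^sub>2 \<Longrightarrow> \<theta>\<^sub>1 \<le> \<theta>\<^sub>2"
  by (rule single_crossing[of _ "a \<theta>\<^sub>2" "pay (a \<theta>\<^sub>2)" "a \<theta>\<^sub>1" "pay (a \<theta>\<^sub>1)"])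
    (auto intro: incentive_compatible)

lemma level_attained_below:
  assumes "\<theta> \<in> T" "y \<in> a ` T" "y \<le> a \<theta>"
  obtains \<theta>' where "\<theta>' \<in> T" "a \<theta>' = y" "\<theta>' \<le> \<theta>"
proof (cases "y = a \<theta>")
  case True
  then show ?thesis using that assms(1) by blast
next
  case False
  obtain \<theta>' where "\<theta>' \<in> T" "a \<theta>' = y" using assms(2) by blast
  then show ?thesis using that allocation_mono[of \<theta>' \<theta>] assms False by auto
qed

lemma level_attained_above:
  assumes "\<theta> \<in> T" "y \<in> a ` T" "a \<theta> \<le> y"
  obtains \<theta>' where "\<theta>' \<in> T" "a \<theta>' = y" "\<theta> \<le> \<theta>'"
proof (cases "y = a \<theta>")
  case True
  then show ?thesis using that assms(1) by blast
next
  case False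
  obtain \<theta>' where "\<theta>' \<in> T" "a \<theta>' = y" using assms(2) by blast
  then show ?thesis using that allocation_mono[of \<theta> \<theta>'] assms False by auto
qed

lemma price_increment_le_type:
  assumes "\<theta> \<in> T" "x \<in> insert 0 (a ` T)" "x < a \<theta>"
  shows "(pay (a \<theta>) - pay x) / (a \<theta> - x) \<le> \<theta>"
  using incentive_compatible[OF assms(1,2)] assms(3)
  by (simp add: pos_divide_le_eq algebra_simps)

lemma type_le_price_increment:
  assumes "\<theta> \<in> T" "y \<in> insert 0 (a ` T)" "a \<theta> < y"
  shows "\<theta> \<le> (pay y - pay (a \<theta>)) / (y - a \<theta>)"
  using incentive_compatible[OF assms(1,2)] assms(3)
  by (simp add: pos_le_divide_eq algebra_simps)

definition increment_price :: "(nat \<Rightarrow> real) \<Rightarrow> nat \<Rightarrow> real" where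
  "increment_price A j = (pay (A (Suc j)) - pay (A j)) / (A (Suc j) - A j)"

text \<open>For the levels \<open>A 0 < \<dots> < A m\<close> of the menu, a type buys exactly the increments whose
  price it can afford: the increments below its own level were bought by weakly lower types,
  the ones above it by weakly higher types.\<close>

lemma payment_le_increment_lottery:
  assumes A0: "A 0 = 0" and A_range: "A ` {..m} = insert 0 (a ` T)"
    and A_strict: "\<And>i j. i < j \<Longrightarrow> j \<le> m \<Longrightarrow> A i < A j" and \<theta>: "\<theta> \<in> T"
  shows "pay (a \<theta>) \<le> (\<Sum>j<m. (A (Suc j) - A j) *
                          (if increment_price A j \<le> \<theta> then increment_price A j else 0))"
    (is "_ \<le> (\<Sum>j<m. ?lottery j)")
proof -
  have A_menu: "A i \<in> insert 0 (a ` T)" if "i \<le> m" for i using A_range that by auto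
  have A_level: "A i \<in> a ` T" if "i \<le> m" "i = 0 \<longrightarrow> A 0 \<in> a ` T" for i
    using A_menu[OF that(1)] A_strict[of 0 i] that A0 by (cases "i = 0") auto
  obtain k where k: "k \<le> m" "A k = a \<theta>" using A_range \<theta> by (metis atMost_iff imageE imageI insertI2)
  have bought: "?lottery j = pay (A (Suc j)) - pay (A j)" if j: "j < k" for j
  proof -
    have "A (Suc j) \<le> a \<theta>" using A_strict[of "Suc j" k] k j by (cases "Suc j = k") auto
    then obtain \<theta>' where \<theta>': "\<theta>' \<in> T" "a \<theta>' = A (Suc j)" "\<theta>' \<le> \<theta>"
      using level_attained_below[OF \<theta> A_level[of "Suc j"]] k j by auto
    have "increment_price A j \<le> \<theta>'"
      using price_increment_le_type[OF \<theta>'(1) A_menu[of j]] A_strict[of j "Suc j"] \<theta>'(2) k j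
      by (simp add: increment_price_def)
    then show ?thesis using A_strict[of j "Suc j"] \<theta>'(3) k j by (simp add: increment_price_def)
  qed
  have not_bought: "0 \<le> ?lottery j" if j: "k \<le> j" "j < m" for j
  proof -
    have "a \<theta> \<le> A j" using A_strict[of k j] k j by (cases "k = j") auto
    moreover have "A j \<in> a ` T" using A_level[of j] j k \<theta> by auto
    ultimately obtain \<theta>'' where \<theta>'': "\<theta>'' \<in> T" "a \<theta>'' = A j" "\<theta> \<le> \<theta>''"
      using level_attained_above[OF \<theta>] by blast
    have "\<theta>'' \<le> increment_price A j"
      using type_le_price_increment[OF \<theta>''(1) A_menu[of "Suc j"]] A_strict[of j "Suc j"] \<theta>''(2) j
      by (simp add: increment_price_def)
    then show ?thesis using A_strict[of j "Suc j"] \<theta>''(3) \<theta> types_nonneg j by auto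
  qed
  have "pay (a \<theta>) = pay (A k) - pay (A 0)" using k(2) A0 pay_zero by simp
  also have "\<dots> = (\<Sum>j<k. pay (A (Suc j)) - pay (A j))" by (rule sum_lessThan_telescope[symmetric])
  also have "\<dots> = (\<Sum>j<k. ?lottery j)" by (simp add: bought)
  also have "\<dots> \<le> (\<Sum>j<m. ?lottery j)" by (rule sum_mono2) (use k not_bought in auto)
  finally show ?thesis .
qed

lemma payment_le_posted_price_lottery:
  obtains m :: nat and w p :: "nat \<Rightarrow> real"
  where "\<And>j. j < m \<Longrightarrow> 0 \<le> w j" "(\<Sum>j<m. w j) \<le> 1"
    "\<And>\<theta>. \<theta> \<in> T \<Longrightarrow> pay (a \<theta>) \<le> (\<Sum>j<m. w j * (if p j \<le> \<theta> then p j else 0))"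
proof -
  obtain m :: nat and A where A0: "A 0 = 0" and A_range: "A ` {..m} = insert 0 (a ` T)"
    and A_strict: "\<And>i j. i < j \<Longrightarrow> j \<le> m \<Longrightarrow> A i < A j"
    by (rule finite_strict_enumeration[of "insert 0 (a ` T)" 0])
      (use finite_levels levels_unit in auto)
  have "(\<Sum>j<m. A (Suc j) - A j) = A m" by (simp add: sum_lessThan_telescope A0)
  also have "\<dots> \<le> 1"
  proof -
    have "A m \<in> insert 0 (a ` T)" unfolding A_range[symmetric] by simp
    then show ?thesis using levels_unit by auto
  qed
  finally have "(\<Sum>j<m. A (Suc j) - A j) \<le> 1" .
  then show ?thesis
    using that[of m "\<lambda>j. A (Suc j) - A j" "increment_price A"] A_strict[of _ "Suc _"]
      payment_le_increment_lottery[OF A0 A_range A_strict]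
    by (simp add: less_imp_le)
qed

end

text \<open>Two types receiving the same allocation pay the same (each would otherwise mimic the
  other), so an admissible mechanism is a menu pricing its allocation levels.\<close>

definition menu_price :: "real set \<Rightarrow> (real \<Rightarrow> real \<times> real) \<Rightarrow> real \<Rightarrow> real" where
  "menu_price T F x = x * fst (F (SOME \<theta>. \<theta> \<in> T \<and> snd (F \<theta>) = x))"

lemma admissible_payment_eq:
  assumes adm: "admissible lo hi F" and \<theta>: "\<theta> \<in> {lo..hi}"
  shows "snd (F \<theta>) * fst (F \<theta>) = menu_price {lo..hi} F (snd (F \<theta>))"
proof -
  define \<theta>' where "\<theta>' = (SOME \<theta>'. \<theta>' \<in> {lo..hi} \<and> snd (F \<theta>') = snd (F \<theta>))"
  have "\<theta>' \<in> {lo..hi} \<and> snd (F \<theta>') = snd (F \<theta>)"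
    unfolding \<theta>'_def by (rule someI[of _ \<theta>]) (use \<theta> in simp)
  moreover have "util (F \<theta>') \<theta> \<le> util (F \<theta>) \<theta>" "util (F \<theta>) \<theta>' \<le> util (F \<theta>') \<theta>'"
    using adm \<theta> calculation unfolding admissible_def by auto
  ultimately show ?thesis unfolding menu_price_def \<theta>'_def[symmetric] util_def by auto
qed

lemma admissible_ic_menu:
  assumes "0 \<le> lo" and adm: "admissible lo hi F"
  shows "ic_menu {lo..hi} (\<lambda>\<theta>. snd (F \<theta>)) (menu_price {lo..hi} F)"
proof
  have range: "F ` {lo..hi} \<subseteq> {0..hi} \<times> {0..1}" and "finite (F ` {lo..hi})"
    using adm unfolding admissible_def by auto
  then show "finite ((\<lambda>\<theta>. snd (F \<theta>)) ` {lo..hi})"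
    using finite_imageI[of "F ` {lo..hi}" snd] by (simp add: image_image)
  show "(\<lambda>\<theta>. snd (F \<theta>)) ` {lo..hi} \<subseteq> {0..1}" using range by auto
  show "{lo..hi} \<subseteq> {0..}" using \<open>0 \<le> lo\<close> by auto
  show pay_zero: "menu_price {lo..hi} F 0 = 0" by (simp add: menu_price_def)
  fix \<theta> x
  assume \<theta>: "\<theta> \<in> {lo..hi}" and x: "x \<in> insert 0 ((\<lambda>\<theta>. snd (F \<theta>)) ` {lo..hi})"
  have ir: "0 \<le> util (F \<theta>) \<theta>" and ic: "\<And>\<theta>'. \<theta>' \<in> {lo..hi} \<Longrightarrow> util (F \<theta>') \<theta> \<le> util (F \<theta>) \<theta>"
    using adm \<theta> unfolding admissible_def by auto
  have pay: "menu_price {lo..hi} F (snd (F \<theta>')) = snd (F \<theta>') * fst (F \<theta>')"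
    if "\<theta>' \<in> {lo..hi}" for \<theta>'
    using admissible_payment_eq[OF adm that] by simp
  show "\<theta> * x - menu_price {lo..hi} F x
        \<le> \<theta> * snd (F \<theta>) - menu_price {lo..hi} F (snd (F \<theta>))"
  proof (cases "x = 0")
    case True
    then show ?thesis using ir pay[OF \<theta>] pay_zero by (simp add: util_def)
  next
    case False
    then obtain \<theta>' where \<theta>': "\<theta>' \<in> {lo..hi}" "x = snd (F \<theta>')" using x by auto
    then show ?thesis using ic[OF \<theta>'(1)] pay[OF \<theta>] pay[OF \<theta>'(1)] by (simp add: util_def)
  qed
qed

lemma revenue_le_of_price_revenue_le:
  assumes "0 \<le> lo" and cont: "continuous_on {lo..hi} \<gamma>"
    and \<gamma>_nonneg: "\<And>x. x \<in> {lo..hi} \<Longrightarrow> 0 \<le> \<gamma> x"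
    and adm: "admissible lo hi F" and M: "\<And>p. price_revenue lo hi \<gamma> p \<le> M"
  shows "revenue lo hi \<gamma> F \<le> M"
proof -
  interpret ic_menu "{lo..hi}" "\<lambda>\<theta>. snd (F \<theta>)" "menu_price {lo..hi} F"
    by (rule admissible_ic_menu[OF assms(1) adm])
  obtain m :: nat and w p :: "nat \<Rightarrow> real" where w_nonneg: "\<And>j. j < m \<Longrightarrow> 0 \<le> w j"
    and total: "(\<Sum>j<m. w j) \<le> 1"
    and dominated: "\<And>\<theta>. \<theta> \<in> {lo..hi} \<Longrightarrow> menu_price {lo..hi} F (snd (F \<theta>))
                        \<le> (\<Sum>j<m. w j * (if p j \<le> \<theta> then p j else 0))"
    using payment_le_posted_price_lottery by blast
  define g where "g \<theta> = menu_price {lo..hi} F (snd (F \<theta>)) * \<gamma> \<theta>" for \<theta>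
  define h where "h \<theta> = (\<Sum>j<m. w j * (if p j \<le> \<theta> then p j * \<gamma> \<theta> else 0))" for \<theta>
  have M_nonneg: "0 \<le> M" using M[of "hi + 1"] price_revenue_above_support[of hi "hi + 1"] by simp
  have revenue_eq: "revenue lo hi \<gamma> F = integral {lo..hi} g"
    unfolding revenue_def g_def by (rule integral_cong) (simp add: admissible_payment_eq[OF adm])
  have h_integral: "(h has_integral (\<Sum>j<m. w j * price_revenue lo hi \<gamma> (p j))) {lo..hi}"
    unfolding h_def
    by (intro has_integral_sum finite_lessThan has_integral_mult_right price_revenue_has_integral cont)
  have g_le_h: "g \<theta> \<le> h \<theta>" if \<theta>: "\<theta> \<in> {lo..hi}" for \<theta>
  proof -
    have "g \<theta> \<le> (\<Sum>j<m. w j * (if p j \<le> \<theta> then p j else 0)) * \<gamma> \<theta>"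
      unfolding g_def by (rule mult_right_mono[OF dominated[OF \<theta>] \<gamma>_nonneg[OF \<theta>]])
    also have "\<dots> = h \<theta>" unfolding h_def sum_distrib_right by (rule sum.cong) auto
    finally show ?thesis .
  qed
  have "(\<Sum>j<m. w j * price_revenue lo hi \<gamma> (p j)) \<le> (\<Sum>j<m. w j) * M"
    unfolding sum_distrib_right by (rule sum_mono) (use w_nonneg M in \<open>auto intro: mult_left_mono\<close>)
  also have "\<dots> \<le> M" using total M_nonneg sum_nonneg[of "{..<m}" w] w_nonneg
    by (simp add: mult_left_le_one_le)
  finally have lottery_le: "(\<Sum>j<m. w j * price_revenue lo hi \<gamma> (p j)) \<le> M" .
  show ?thesis
  proof (cases "g integrable_on {lo..hi}")
    case True
    then have "integral {lo..hi} g \<le> integral {lo..hi} h"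
      by (rule integral_le) (use h_integral g_le_h in auto)
    then show ?thesis using revenue_eq integral_unique[OF h_integral] lottery_le by linarith
  next
    case False
    then show ?thesis by (simp add: revenue_eq not_integrable_integral M_nonneg)
  qed
qed

lemma price_revenue_attains_max:
  assumes "lo \<le> hi" and cont: "continuous_on {lo..hi} \<gamma>"
    and \<gamma>_nonneg: "\<And>x. x \<in> {lo..hi} \<Longrightarrow> 0 \<le> \<gamma> x"
  obtains ps where "ps \<in> {lo..hi}" "\<And>p. price_revenue lo hi \<gamma> p \<le> price_revenue lo hi \<gamma> ps"
proof -
  have "continuous_on {lo..hi} (\<lambda>s. s * integral {s..hi} \<gamma>)"
    by (intro continuous_on_mult continuous_on_id indefinite_integral_continuous_1'
        integrable_continuous_real cont)
  then have "continuous_on {lo..hi} (price_revenue lo hi \<gamma>)"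
    by (rule continuous_on_cong[THEN iffD1, rotated 2]) (auto simp: price_revenue_def max_def)
  then obtain ps where ps: "ps \<in> {lo..hi}"
    and ps_max: "\<And>s. s \<in> {lo..hi} \<Longrightarrow> price_revenue lo hi \<gamma> s \<le> price_revenue lo hi \<gamma> ps"
    using continuous_attains_sup[of "{lo..hi}" "price_revenue lo hi \<gamma>"] \<open>lo \<le> hi\<close> by auto
  have "price_revenue lo hi \<gamma> p \<le> price_revenue lo hi \<gamma> ps" for p
  proof (cases "p < lo")
    case True
    have "0 \<le> integral {lo..hi} \<gamma>"
      by (rule integral_nonneg[OF integrable_continuous_real[OF cont] \<gamma>_nonneg])
    then have "price_revenue lo hi \<gamma> p \<le> price_revenue lo hi \<gamma> lo"
      using True by (simp add: price_revenue_def max_def mult_right_mono)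
    also have "\<dots> \<le> price_revenue lo hi \<gamma> ps" using ps_max \<open>lo \<le> hi\<close> by simp
    finally show ?thesis .
  next
    case False
    show ?thesis
    proof (cases "p \<le> hi")
      case True
      then show ?thesis using False ps_max by simp
    next
      case above: False
      have "price_revenue lo hi \<gamma> hi = 0"
        using \<open>lo \<le> hi\<close> integral_refl[of hi \<gamma>] by (simp add: price_revenue_def cbox_interval)
      then show ?thesis
        using ps_max[of hi] price_revenue_above_support[of hi p] above \<open>lo \<le> hi\<close> by simp
    qed
  qed
  then show ?thesis using that ps by blast
qed

lemma posted_price_admissible:
  assumes "0 \<le> p" "p \<le> hi"
  shows "admissible lo hi (posted_price p)"
proof -
  have "posted_price p ` {lo..hi} \<subseteq> {(0, 0), (p, 1)}" by (auto simp: posted_price_def)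
  then have "finite (posted_price p ` {lo..hi})" by (rule finite_subset) simp
  moreover have "posted_price p ` {lo..hi} \<subseteq> {0..hi} \<times> {0..1}"
    using assms by (auto simp: posted_price_def)
  ultimately show ?thesis unfolding admissible_def by (auto simp: posted_price_def util_def)
qed

lemma revenue_posted_price:
  assumes "continuous_on {lo..hi} \<gamma>"
  shows "revenue lo hi \<gamma> (posted_price p) = price_revenue lo hi \<gamma> p"
  unfolding revenue_def
proof (rule integral_unique)
  show "((\<lambda>\<theta>. snd (posted_price p \<theta>) * fst (posted_price p \<theta>) * \<gamma> \<theta>)
          has_integral price_revenue lo hi \<gamma> p) {lo..hi}"
    using price_revenue_has_integral[OF assms, of p]
    by (rule has_integral_spike[OF negligible_sing[of p], rotated]) (auto simp: posted_price_def)
qed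

theorem mainTheorem19:
  fixes lo hi :: real and \<gamma> :: "real \<Rightarrow> real"
  assumes "0 < lo" and "lo < hi"
    and "continuous_on {lo..hi} \<gamma>"
    and "\<And>x. x \<in> {lo..hi} \<Longrightarrow> \<gamma> x > 0"
    and "integral {lo..hi} \<gamma> = 1"
    and "\<And>x y. lo \<le> x \<Longrightarrow> x < y \<Longrightarrow> y < hi \<Longrightarrow>
           \<gamma> x / (1 - cdf lo \<gamma> x) \<le> \<gamma> y / (1 - cdf lo \<gamma> y)"
  shows "\<exists>Fs. admissible lo hi Fs \<and>
           (\<forall>F. admissible lo hi F \<longrightarrow> revenue lo hi \<gamma> F \<le> revenue lo hi \<gamma> Fs) \<and>
           (\<exists>\<theta>s\<in>{lo..hi}. (\<forall>\<theta>\<in>{lo..\<theta>s}. Fs \<theta> = (0, 0)) \<and>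
                           (\<forall>\<theta>\<in>{\<theta>s<..hi}. Fs \<theta> = (\<theta>s, 1)))"
proof -
  have \<gamma>_nonneg: "\<And>x. x \<in> {lo..hi} \<Longrightarrow> 0 \<le> \<gamma> x" using assms(4) by (simp add: less_imp_le)
  obtain ps where ps: "ps \<in> {lo..hi}"
    and ps_max: "\<And>p. price_revenue lo hi \<gamma> p \<le> price_revenue lo hi \<gamma> ps"
    using price_revenue_attains_max[OF _ assms(3) \<gamma>_nonneg] assms(2) by auto
  have "admissible lo hi (posted_price ps)" using ps assms(1) by (intro posted_price_admissible) auto
  moreover have "revenue lo hi \<gamma> F \<le> revenue lo hi \<gamma> (posted_price ps)" if "admissible lo hi F" for F
    using revenue_le_of_price_revenue_le[OF _ assms(3) \<gamma>_nonneg that ps_max] assms(1)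
    by (simp add: revenue_posted_price[OF assms(3)])
  moreover have "\<forall>\<theta>\<in>{lo..ps}. posted_price ps \<theta> = (0, 0)" "\<forall>\<theta>\<in>{ps<..hi}. posted_price ps \<theta> = (ps, 1)"
    by (auto simp: posted_price_def)
  ultimately show ?thesis using ps by blast
qed

end
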